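(* Let $\Gamma$ be a set of clauses with designated blocking variables. If a clause $C$ is cost-SR w.r.t. $\Gamma$, then $\mathrm{cost}(\Gamma)=\mathrm{cost}(\Gamma\cup\{C\})$.
   Context: Substitutions map variables to $0$, $1$ or literals ($\sigma(\lnot x)=\lnot\sigma(x)$, $\sigma(0)=0$, $\sigma(1)=1$); $(\sigma\circ\tau)(x)=\sigma(\tau(x))$; total assignments assign Boolean values to all variables. $C{\upharpoonright}_\sigma$: apply $\sigma$ to the literals and simplify ($D\lor0=D$, $D\lor1=1$, merge repeats); $\sigma\models C$ if the result is $1$ or tautological; $\Gamma{\upharpoonright}_\sigma$ is the multiset of $C{\upharpoonright}_\sigma\ne1$, $C\in\Gamma$. $\lnot C$ is the partial assignment falsifying all literals of $C$; $\tau\supseteq\rho$ means extension. $\Gamma\vdash_1 C$ means unit propagation on $\Gamma{\upharpoonright}_{\lnot C}$ derives the empty clause; $\Gamma\vdash_1\Delta$ means this for all $D\in\Delta$. With blocking variables $b_1,\dots,b_m$: $\mathrm{cost}(\alpha)=\sum_i\alpha(b_i)$, $\mathrm{cost}(\Gamma)=\min\{\mathrm{cost}(\alpha):\alpha\models\Gamma\}$. $C$ is cost-SR w.r.t. $\Gamma$ if there is a substitution $\sigma$ with (1) $\Gamma{\upharpoonright}_{\lnot C}\vdash_1(\Gamma\cup\{C\}){\upharpoonright}_\sigma$ and (2) $\mathrm{cost}(\tau\circ\sigma)\le\mathrm{cost}(\tau)$ for every total assignment $\tau\supseteq\lnot C$. *)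

theory Defs
  imports Main "HOL-Library.Extended_Nat"
begin

datatype 'v lit = Pos 'v | Neg 'v

type_synonym 'v clause = "'v lit set"
type_synonym 'v assignment = "'v \<Rightarrow> bool"

fun lneg :: "'v lit \<Rightarrow> 'v lit" where
  "lneg (Pos x) = Neg x" | "lneg (Neg x) = Pos x"

fun lvar :: "'v lit \<Rightarrow> 'v" where
  "lvar (Pos x) = x" | "lvar (Neg x) = x"

fun lit_val :: "'v assignment \<Rightarrow> 'v lit \<Rightarrow> bool" where
  "lit_val \<alpha> (Pos x) = \<alpha> x" | "lit_val \<alpha> (Neg x) = (\<not> \<alpha> x)"

definition sat_clause :: "'v assignment \<Rightarrow> 'v clause \<Rightarrow> bool" where
  "sat_clause \<alpha> C \<longleftrightarrow> (\<exists>l\<in>C. lit_val \<alpha> l)"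

definition sat_cnf :: "'v assignment \<Rightarrow> 'v clause set \<Rightarrow> bool" where
  "sat_cnf \<alpha> \<Gamma> \<longleftrightarrow> (\<forall>C\<in>\<Gamma>. sat_clause \<alpha> C)"

datatype 'v sval = Const bool | Lit "'v lit"

type_synonym 'v subst = "'v \<Rightarrow> 'v sval"

fun sneg :: "'v sval \<Rightarrow> 'v sval" where
  "sneg (Const b) = Const (\<not> b)" | "sneg (Lit l) = Lit (lneg l)"

fun subst_lit :: "'v subst \<Rightarrow> 'v lit \<Rightarrow> 'v sval" where
  "subst_lit \<sigma> (Pos x) = \<sigma> x" | "subst_lit \<sigma> (Neg x) = sneg (\<sigma> x)"

text \<open>Restriction of a clause: None represents the constant 1 (satisfied);
  otherwise the remaining literals (0-literals dropped, repeats merged).\<close>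
definition restrict :: "'v subst \<Rightarrow> 'v clause \<Rightarrow> 'v clause option" where
  "restrict \<sigma> C =
     (if \<exists>l\<in>C. subst_lit \<sigma> l = Const True then None
      else Some {l'. \<exists>l\<in>C. subst_lit \<sigma> l = Lit l'})"

definition restrict_cnf :: "'v subst \<Rightarrow> 'v clause set \<Rightarrow> 'v clause set" where
  "restrict_cnf \<sigma> \<Gamma> = {D. \<exists>C\<in>\<Gamma>. restrict \<sigma> C = Some D}"

fun sval_val :: "'v assignment \<Rightarrow> 'v sval \<Rightarrow> bool" where
  "sval_val \<tau> (Const b) = b" | "sval_val \<tau> (Lit l) = lit_val \<tau> l"

definition comp_assign :: "'v assignment \<Rightarrow> 'v subst \<Rightarrow> 'v assignment" where
  "comp_assign \<tau> \<sigma> = (\<lambda>x. sval_val \<tau> (\<sigma> x))"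

text \<open>The partial assignment not-C falsifying all literals of C, as a substitution
  (unassigned variables are mapped to themselves).\<close>
definition neg_clause :: "'v clause \<Rightarrow> 'v subst" where
  "neg_clause C = (\<lambda>x. if Pos x \<in> C then Const False
                       else if Neg x \<in> C then Const True else Lit (Pos x))"

definition extends_neg :: "'v assignment \<Rightarrow> 'v clause \<Rightarrow> bool" where
  "extends_neg \<tau> C \<longleftrightarrow> (\<forall>l\<in>C. \<not> lit_val \<tau> l)"

definition unit_subst :: "'v lit \<Rightarrow> 'v subst" where
  "unit_subst l = (\<lambda>x. if x = lvar l then Const (l = Pos x) else Lit (Pos x))"

inductive up_refutes :: "'v clause set \<Rightarrow> bool" where
  empty: "{} \<in> F \<Longrightarrow> up_refutes F"
| unit: "{l} \<in> F \<Longrightarrow> up_refutes (restrict_cnf (unit_subst l) F) \<Longrightarrow> up_refutes F"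

definition rup :: "'v clause set \<Rightarrow> 'v clause \<Rightarrow> bool" where
  "rup \<Gamma> C \<longleftrightarrow> up_refutes (restrict_cnf (neg_clause C) \<Gamma>)"

definition cost_assign :: "'v set \<Rightarrow> 'v assignment \<Rightarrow> nat" where
  "cost_assign B \<alpha> = card {b\<in>B. \<alpha> b}"

text \<open>Minimum cost of a satisfying assignment; infinity if unsatisfiable.\<close>
definition cost_cnf :: "'v set \<Rightarrow> 'v clause set \<Rightarrow> enat" where
  "cost_cnf B \<Gamma> = (INF \<alpha>\<in>{\<alpha>. sat_cnf \<alpha> \<Gamma>}. enat (cost_assign B \<alpha>))"

definition cost_SR :: "'v set \<Rightarrow> 'v clause set \<Rightarrow> 'v clause \<Rightarrow> bool" where
  "cost_SR B \<Gamma> C \<longleftrightarrow>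
     (\<exists>\<sigma>. (\<forall>D\<in>restrict_cnf \<sigma> (insert C \<Gamma>). rup (restrict_cnf (neg_clause C) \<Gamma>) D)
        \<and> (\<forall>\<tau>. extends_neg \<tau> C \<longrightarrow> cost_assign B (comp_assign \<tau> \<sigma>) \<le> cost_assign B \<tau>))"

end

theory Submission
  imports Defs
begin

text \<open>Let \<open>\<sigma>\<close> witness that \<open>C\<close> is cost-SR and let \<open>\<alpha>\<close> be a model of \<open>\<Gamma>\<close>. If \<open>\<alpha>\<close>
  falsifies \<open>C\<close>, it extends \<open>\<not>C\<close> and hence satisfies \<open>\<Gamma>\<restriction>\<not>C\<close>; since unit propagation is
  sound, \<open>\<alpha>\<close> then satisfies every clause of \<open>(\<Gamma> \<union> {C})\<restriction>\<sigma>\<close>, i.e. \<open>\<alpha> \<circ> \<sigma>\<close> is a model of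
  \<open>\<Gamma> \<union> {C}\<close>, and it costs no more than \<open>\<alpha>\<close>. So every model of \<open>\<Gamma>\<close> is matched by an
  at most as expensive model of \<open>\<Gamma> \<union> {C}\<close>.\<close>

lemma sval_val_sneg [simp]: "sval_val \<tau> (sneg v) = (\<not> sval_val \<tau> v)"
  by (cases v rule: sneg.cases) (auto elim: lit_val.elims)

lemma lit_val_comp_assign: "lit_val (comp_assign \<tau> \<sigma>) l = sval_val \<tau> (subst_lit \<sigma> l)"
  by (cases l) (auto simp: comp_assign_def)

lemma sval_val_iff: "sval_val \<alpha> v \<longleftrightarrow> v = Const True \<or> (\<exists>l. v = Lit l \<and> lit_val \<alpha> l)"
  by (cases v) auto

lemma sat_clause_comp_assign_iff:
  "sat_clause (comp_assign \<alpha> \<sigma>) D \<longleftrightarrow>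
     (case restrict \<sigma> D of None \<Rightarrow> True | Some D' \<Rightarrow> sat_clause \<alpha> D')"
  unfolding sat_clause_def lit_val_comp_assign sval_val_iff restrict_def by auto

lemma sat_cnf_restrict_cnf_iff:
  "sat_cnf \<alpha> (restrict_cnf \<sigma> \<Gamma>) \<longleftrightarrow> sat_cnf (comp_assign \<alpha> \<sigma>) \<Gamma>"
  unfolding sat_cnf_def restrict_cnf_def sat_clause_comp_assign_iff
  by (auto split: option.splits)

lemma comp_assign_unit_subst: "lit_val \<alpha> l \<Longrightarrow> comp_assign \<alpha> (unit_subst l) = \<alpha>"
  by (cases l) (auto simp: comp_assign_def unit_subst_def)

lemma comp_assign_neg_clause: "extends_neg \<alpha> C \<Longrightarrow> comp_assign \<alpha> (neg_clause C) = \<alpha>"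
  by (force simp: comp_assign_def neg_clause_def extends_neg_def)

lemma up_refutes_unsat: "up_refutes F \<Longrightarrow> \<not> sat_cnf \<alpha> F"
proof (induction rule: up_refutes.induct)
  case (empty F)
  then show ?case by (auto simp: sat_cnf_def sat_clause_def)
next
  case (unit l F)
  show ?case
  proof
    assume "sat_cnf \<alpha> F"
    moreover from this and \<open>{l} \<in> F\<close> have "lit_val \<alpha> l"
      by (auto simp: sat_cnf_def sat_clause_def)
    ultimately have "sat_cnf \<alpha> (restrict_cnf (unit_subst l) F)"
      by (simp add: sat_cnf_restrict_cnf_iff comp_assign_unit_subst)
    with unit.IH show False by blast
  qed
qed

lemma rup_sound:
  assumes "rup \<Gamma> D" and "sat_cnf \<alpha> \<Gamma>"
  shows "sat_clause \<alpha> D"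
proof (rule ccontr)
  assume "\<not> sat_clause \<alpha> D"
  then have "extends_neg \<alpha> D"
    by (auto simp: extends_neg_def sat_clause_def)
  with assms(2) have "sat_cnf \<alpha> (restrict_cnf (neg_clause D) \<Gamma>)"
    by (simp add: sat_cnf_restrict_cnf_iff comp_assign_neg_clause)
  with assms(1) show False
    by (auto simp: rup_def dest: up_refutes_unsat)
qed

lemma cost_cnf_le_cost_assign: "sat_cnf \<alpha> \<Gamma> \<Longrightarrow> cost_cnf B \<Gamma> \<le> enat (cost_assign B \<alpha>)"
  unfolding cost_cnf_def by (auto intro: INF_lower2)

lemma cost_cnf_mono: "\<Gamma> \<subseteq> \<Gamma>' \<Longrightarrow> cost_cnf B \<Gamma> \<le> cost_cnf B \<Gamma>'"
  unfolding cost_cnf_def by (rule INF_superset_mono) (auto simp: sat_cnf_def)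

lemma cost_cnf_le_if_cheaper_model:
  assumes "\<And>\<alpha>. sat_cnf \<alpha> \<Gamma> \<Longrightarrow> \<exists>\<beta>. sat_cnf \<beta> \<Gamma>' \<and> cost_assign B \<beta> \<le> cost_assign B \<alpha>"
  shows "cost_cnf B \<Gamma>' \<le> cost_cnf B \<Gamma>"
  unfolding cost_cnf_def[of B \<Gamma>]
proof (rule INF_greatest, clarify)
  fix \<alpha> assume "sat_cnf \<alpha> \<Gamma>"
  then obtain \<beta> where "sat_cnf \<beta> \<Gamma>'" "cost_assign B \<beta> \<le> cost_assign B \<alpha>"
    using assms by blast
  then show "cost_cnf B \<Gamma>' \<le> enat (cost_assign B \<alpha>)"
    by (meson cost_cnf_le_cost_assign enat_ord_simps(1) order_trans)
qed

lemma sat_cnf_comp_assign_SR_witness: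
  assumes rup_witness: "\<forall>D\<in>restrict_cnf \<sigma> (insert C \<Gamma>). rup (restrict_cnf (neg_clause C) \<Gamma>) D"
    and "sat_cnf \<alpha> \<Gamma>" and "extends_neg \<alpha> C"
  shows "sat_cnf (comp_assign \<alpha> \<sigma>) (insert C \<Gamma>)"
proof -
  have "sat_cnf \<alpha> (restrict_cnf (neg_clause C) \<Gamma>)"
    using assms(2,3) by (simp add: sat_cnf_restrict_cnf_iff comp_assign_neg_clause)
  with rup_witness have "sat_cnf \<alpha> (restrict_cnf \<sigma> (insert C \<Gamma>))"
    by (auto simp: sat_cnf_def intro: rup_sound)
  then show ?thesis
    by (simp add: sat_cnf_restrict_cnf_iff)
qed

theorem lemma3p7:
  fixes B :: "'v set" and \<Gamma> :: "'v clause set" and C :: "'v clause"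
  assumes "finite B"
    and "finite \<Gamma>" and "\<forall>D\<in>\<Gamma>. finite D" and "finite C"
    and "cost_SR B \<Gamma> C"
  shows "cost_cnf B \<Gamma> = cost_cnf B (insert C \<Gamma>)"
proof (rule antisym)
  show "cost_cnf B \<Gamma> \<le> cost_cnf B (insert C \<Gamma>)"
    by (rule cost_cnf_mono) blast
  obtain \<sigma> where rup_witness: "\<forall>D\<in>restrict_cnf \<sigma> (insert C \<Gamma>). rup (restrict_cnf (neg_clause C) \<Gamma>) D"
    and cost_witness: "\<forall>\<tau>. extends_neg \<tau> C \<longrightarrow> cost_assign B (comp_assign \<tau> \<sigma>) \<le> cost_assign B \<tau>"
    using assms(5) by (auto simp: cost_SR_def)
  show "cost_cnf B (insert C \<Gamma>) \<le> cost_cnf B \<Gamma>"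
  proof (rule cost_cnf_le_if_cheaper_model)
    fix \<alpha> assume sat: "sat_cnf \<alpha> \<Gamma>"
    show "\<exists>\<beta>. sat_cnf \<beta> (insert C \<Gamma>) \<and> cost_assign B \<beta> \<le> cost_assign B \<alpha>"
    proof (cases "sat_clause \<alpha> C")
      case True
      with sat show ?thesis by (auto simp: sat_cnf_def)
    next
      case False
      then have "extends_neg \<alpha> C" by (auto simp: extends_neg_def sat_clause_def)
      with sat rup_witness cost_witness show ?thesis
        by (blast intro: sat_cnf_comp_assign_SR_witness)
    qed
  qed
qed
end
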